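(* Let $K^\flat$ be the completion of an algebraic closure of $\mathbb{F}_p((t))$, with valuation ring $K^{\flat,\circ}$ and residue field $k=\overline{\mathbb{F}_p}$, viewed as a subfield of $K^\flat$. Let $u\in K^{\flat,\circ}$ with $|u|<1$ and let $g\in K^{\flat,\circ}\langle X_1,\dots,X_N\rangle$ be of the form \[g=\sum_{i=0}^\infty g_iu^i\quad\text{with } g_i\in k\langle X_1,\dots,X_N\rangle.\] Then there exists $\varepsilon>0$, depending on $g$, such that for every $x\in k^N$, either $g(x)=0$ or $|g(x)|>\varepsilon$.
   Context: $K^{\flat,\circ}\langle X_1,\dots,X_N\rangle$ is the ring of power series with coefficients in $K^{\flat,\circ}$ tending to $0$. Since $k$ carries the trivial absolute value, $k\langle X_1,\dots,X_N\rangle=k[X_1,\dots,X_N]$; in particular $|h(x)|\in\{0,1\}$ for $h\in k[X_1,\dots,X_N]$ and $x\in k^N$. *)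

theory Defs
  imports "HOL-Computational_Algebra.Polynomial"
begin

definition nonarch_abs :: "('a::field \<Rightarrow> real) \<Rightarrow> bool" where
  "nonarch_abs av \<longleftrightarrow>
     (\<forall>x. av x = 0 \<longleftrightarrow> x = 0) \<and> (\<forall>x. av x \<ge> 0) \<and>
     (\<forall>x y. av (x * y) = av x * av y) \<and>
     (\<forall>x y. av (x + y) \<le> max (av x) (av y))"

definition abs_complete :: "('a::field \<Rightarrow> real) \<Rightarrow> bool" where
  "abs_complete av \<longleftrightarrow>
     (\<forall>s::nat \<Rightarrow> 'a. (\<forall>e>0. \<exists>M. \<forall>m\<ge>M. \<forall>n\<ge>M. av (s m - s n) < e) \<longrightarrow>
        (\<exists>L. \<forall>e>0. \<exists>M. \<forall>n\<ge>M. av (s n - L) < e))"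

definition alg_closed_field :: "'a::field itself \<Rightarrow> bool" where
  "alg_closed_field _ \<longleftrightarrow> (\<forall>q::'a poly. degree q > 0 \<longrightarrow> (\<exists>z. poly q z = 0))"

definition is_subfield :: "'a::field set \<Rightarrow> bool" where
  "is_subfield k \<longleftrightarrow> 0 \<in> k \<and> 1 \<in> k \<and> (\<forall>a\<in>k. \<forall>b\<in>k. a + b \<in> k \<and> a * b \<in> k) \<and>
     (\<forall>a\<in>k. - a \<in> k \<and> inverse a \<in> k)"

definition alg_closed_subfield :: "'a::field set \<Rightarrow> bool" where
  "alg_closed_subfield k \<longleftrightarrow> is_subfield k \<and>
     (\<forall>q::'a poly. degree q > 0 \<and> (\<forall>i. coeff q i \<in> k) \<longrightarrow> (\<exists>z\<in>k. poly q z = 0))"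

text \<open>The field $K^\flat$ with its absolute value and the subfield $k = \overline{\mathbb F_p}$
  (a section of the residue map) as used in the paper, axiomatised by the relevant properties.\<close>
definition Kflat_setting :: "nat \<Rightarrow> ('a::field \<Rightarrow> real) \<Rightarrow> 'a set \<Rightarrow> bool" where
  "Kflat_setting p av k \<longleftrightarrow>
     prime p \<and> of_nat p = (0::'a) \<and>
     nonarch_abs av \<and> abs_complete av \<and> (\<exists>t. 0 < av t \<and> av t < 1) \<and>
     alg_closed_field TYPE('a) \<and>
     alg_closed_subfield k \<and>
     (\<forall>c\<in>k. \<exists>n>0. c ^ (p ^ n) = c) \<and>
     (\<forall>c\<in>k. c \<noteq> 0 \<longrightarrow> av c = 1) \<and>
     (\<forall>y. av y \<le> 1 \<longrightarrow> (\<exists>c\<in>k. av (y - c) < 1))"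

definition multi_idx :: "nat \<Rightarrow> (nat \<Rightarrow> nat) set" where
  "multi_idx N = {\<alpha>. \<forall>i\<ge>N. \<alpha> i = 0}"

definition monom_val :: "(nat \<Rightarrow> 'a::comm_ring_1) \<Rightarrow> nat \<Rightarrow> (nat \<Rightarrow> nat) \<Rightarrow> 'a" where
  "monom_val x N \<alpha> = (\<Prod>i<N. x i ^ \<alpha> i)"

definition restricted_ps :: "('a::field \<Rightarrow> real) \<Rightarrow> nat \<Rightarrow> ((nat \<Rightarrow> nat) \<Rightarrow> 'a) \<Rightarrow> bool" where
  "restricted_ps av N g \<longleftrightarrow> (\<forall>\<alpha>\<in>multi_idx N. av (g \<alpha>) \<le> 1) \<and>
     (\<forall>e>0. finite {\<alpha>\<in>multi_idx N. av (g \<alpha>) \<ge> e})"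

definition poly_over :: "'a::field set \<Rightarrow> nat \<Rightarrow> ((nat \<Rightarrow> nat) \<Rightarrow> 'a) \<Rightarrow> bool" where
  "poly_over k N h \<longleftrightarrow> (\<forall>\<alpha>\<in>multi_idx N. h \<alpha> \<in> k) \<and> finite {\<alpha>\<in>multi_idx N. h \<alpha> \<noteq> 0}"

definition abs_has_sum :: "('a::field \<Rightarrow> real) \<Rightarrow> ('i \<Rightarrow> 'a) \<Rightarrow> 'i set \<Rightarrow> 'a \<Rightarrow> bool" where
  "abs_has_sum av f I S \<longleftrightarrow>
     (\<forall>e>0. \<exists>F0. finite F0 \<and> F0 \<subseteq> I \<and>
        (\<forall>F. finite F \<and> F0 \<subseteq> F \<and> F \<subseteq> I \<longrightarrow> av (sum f F - S) < e))"

definition ps_eval :: "('a::field \<Rightarrow> real) \<Rightarrow> nat \<Rightarrow> ((nat \<Rightarrow> nat) \<Rightarrow> 'a) \<Rightarrow> (nat \<Rightarrow> 'a) \<Rightarrow> 'a" where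
  "ps_eval av N g x = (THE S. abs_has_sum av (\<lambda>\<alpha>. g \<alpha> * monom_val x N \<alpha>) (multi_idx N) S)"

text \<open>g = sum_i g_i u^i, convergence in the Gauss norm (uniform in the coefficients).\<close>
definition gauss_series_eq ::
  "('a::field \<Rightarrow> real) \<Rightarrow> nat \<Rightarrow> ((nat \<Rightarrow> nat) \<Rightarrow> 'a) \<Rightarrow> (nat \<Rightarrow> (nat \<Rightarrow> nat) \<Rightarrow> 'a) \<Rightarrow> 'a \<Rightarrow> bool" where
  "gauss_series_eq av N g gs u \<longleftrightarrow>
     (\<forall>e>0. \<exists>M. \<forall>n\<ge>M. \<forall>\<alpha>\<in>multi_idx N. av (g \<alpha> - (\<Sum>i<n. gs i \<alpha> * u ^ i)) < e)"

end

theory Submission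
  imports Defs "HOL-Library.Function_Algebras" "HOL-Library.List_Lexorder"
    "HOL-Library.Product_Lexorder"
begin

text \<open>Write a_i = g_i(x), an element of k, so that g(x) = sum a_i u^i. By Hilbert's basis
  theorem the ideal generated by all g_i is generated by g_0, ..., g_n0 for some n0 that does
  not depend on x. Hence either a_0 = ... = a_n0 = 0, in which case every a_i vanishes and
  g(x) = 0, or the first nonzero a_j has j \<le> n0. Nonzero elements of k have absolute value 1, so
  |a_j u^j| = |u|^j while |a_i u^i| < |u|^j for i > j, and the ultrametric inequality gives
  |g(x)| = |u|^j \<ge> |u|^n0. Hilbert's basis theorem is proved with leading monomials for the
  graded lexicographic order and Dickson's lemma.\<close>

section \<open>Multi-indices and Dickson's lemma\<close>

lemma multi_idx_add: "a \<in> multi_idx N \<Longrightarrow> c \<in> multi_idx N \<Longrightarrow> a + c \<in> multi_idx N"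
  by (simp add: multi_idx_def)

lemma multi_idx_diff: "a \<in> multi_idx N \<Longrightarrow> a - c \<in> multi_idx N"
  by (simp add: multi_idx_def)

text \<open>Keys are compared lexicographically (total degree first, then the exponent list), so
  \<open>grlex_key\<close> realises the graded lexicographic order on \<open>multi_idx N\<close>.\<close>
definition grlex_key :: "nat \<Rightarrow> (nat \<Rightarrow> nat) \<Rightarrow> nat \<times> nat list" where
  "grlex_key N a = ((\<Sum>i<N. a i), map a [0..<N])"

lemma grlex_key_add_mono:
  assumes "grlex_key N a \<le> grlex_key N b"
  shows "grlex_key N (a + c) \<le> grlex_key N (b + c)"
proof -
  have less: "map (a + c) is < map (b + c) is \<longleftrightarrow> map a is < map b is" for "is"
    by (induction "is") auto
  have eq: "map (a + c) is = map (b + c) is \<longleftrightarrow> map a is = map b is" for "is"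
    by (induction "is") auto
  show ?thesis
    using assms less[of "[0..<N]"] eq[of "[0..<N]"]
    by (auto simp: grlex_key_def sum.distrib list_le_def)
qed

lemma inj_on_grlex_key: "inj_on (grlex_key N) (multi_idx N)"
proof (rule inj_onI, rule ext)
  fix a b i assume ab: "a \<in> multi_idx N" "b \<in> multi_idx N" "grlex_key N a = grlex_key N b"
  show "a i = b i"
  proof (cases "i < N")
    case True
    then show ?thesis using ab(3) by (simp add: grlex_key_def map_eq_conv)
  next
    case False
    then show ?thesis using ab(1,2) by (simp add: multi_idx_def)
  qed
qed

lemma finite_multi_idx_deg_le: "finite {b \<in> multi_idx N. (\<Sum>i<N. b i) \<le> d}"
proof -
  let ?extend = "\<lambda>xs i. if i < N then xs ! i else 0"
  have "{b \<in> multi_idx N. (\<Sum>i<N. b i) \<le> d} \<subseteq> ?extend ` {xs. set xs \<subseteq> {0..d} \<and> length xs = N}"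
  proof
    fix b assume b: "b \<in> {b \<in> multi_idx N. (\<Sum>i<N. b i) \<le> d}"
    have "b i \<le> d" if "i < N" for i
      using b member_le_sum[of i "{..<N}" b] that by auto
    then have "map b [0..<N] \<in> {xs. set xs \<subseteq> {0..d} \<and> length xs = N}" by auto
    moreover have "b = ?extend (map b [0..<N])"
      using b by (auto simp: multi_idx_def)
    ultimately show "b \<in> ?extend ` {xs. set xs \<subseteq> {0..d} \<and> length xs = N}" by blast
  qed
  moreover have "finite {xs. set xs \<subseteq> {0..d::nat} \<and> length xs = N}"
    by (rule finite_lists_length_eq) simp
  ultimately show ?thesis by (rule finite_subset[OF _ finite_imageI])
qed

definition grlex_rank :: "nat \<Rightarrow> (nat \<Rightarrow> nat) \<Rightarrow> nat" where
  "grlex_rank N a = card {b \<in> multi_idx N. grlex_key N b < grlex_key N a}"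

lemma grlex_rank_less:
  assumes "b \<in> multi_idx N" "grlex_key N b < grlex_key N a"
  shows "grlex_rank N b < grlex_rank N a"
proof -
  have "finite {c \<in> multi_idx N. grlex_key N c < grlex_key N a}"
    by (rule finite_subset[OF _ finite_multi_idx_deg_le[of N "fst (grlex_key N a)"]])
       (auto simp: grlex_key_def less_prod_def)
  moreover have "{c \<in> multi_idx N. grlex_key N c < grlex_key N b}
      \<subset> {c \<in> multi_idx N. grlex_key N c < grlex_key N a}"
    using assms by auto
  ultimately show ?thesis unfolding grlex_rank_def by (intro psubset_card_mono)
qed

lemma nat_seq_mono_subseq:
  fixes s :: "nat \<Rightarrow> nat"
  shows "\<exists>r::nat \<Rightarrow> nat. strict_mono r \<and> mono (s \<circ> r)"
proof -
  obtain f where f: "strict_mono f" "monoseq (s \<circ> f)"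
    using seq_monosub[of s] by (auto simp: comp_def)
  show ?thesis
  proof (cases "mono (s \<circ> f)")
    case True
    then show ?thesis using f(1) by blast
  next
    case False
    then have anti: "antimono (s \<circ> f)"
      using f(2) by (auto simp: monoseq_def mono_def antimono_def)
    define v where "v = (LEAST v. \<exists>n. s (f n) = v)"
    obtain n0 where n0: "s (f n0) = v"
      using LeastI[of "\<lambda>v. \<exists>n. s (f n) = v" "s (f 0)"] unfolding v_def by blast
    have "s (f (n + n0)) = v" for n
    proof -
      have "v \<le> s (f (n + n0))" unfolding v_def by (rule Least_le) blast
      moreover have "s (f (n + n0)) \<le> s (f n0)" using anti by (simp add: antimono_def)
      ultimately show ?thesis using n0 by simp
    qed
    then have "mono (s \<circ> (\<lambda>n. f (n + n0)))" by (simp add: mono_def)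
    moreover have "strict_mono (\<lambda>n. f (n + n0))"
      using f(1) by (simp add: strict_mono_def)
    ultimately show ?thesis by blast
  qed
qed

lemma dickson_subseq:
  fixes a :: "nat \<Rightarrow> nat \<Rightarrow> nat"
  shows "\<exists>r::nat \<Rightarrow> nat. strict_mono r \<and> (\<forall>m n. m \<le> n \<longrightarrow> (\<forall>i<N. a (r m) i \<le> a (r n) i))"
proof (induction N)
  case 0
  show ?case by (intro exI[of _ id]) (simp add: strict_mono_def)
next
  case (Suc N)
  then obtain r :: "nat \<Rightarrow> nat" where
    r: "strict_mono r" "\<And>m n i. m \<le> n \<Longrightarrow> i < N \<Longrightarrow> a (r m) i \<le> a (r n) i"
    by blast
  obtain r' :: "nat \<Rightarrow> nat" where r': "strict_mono r'" "mono (\<lambda>n. a (r (r' n)) N)"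
    using nat_seq_mono_subseq[of "\<lambda>n. a (r n) N"] by (auto simp: comp_def)
  have "a (r (r' m)) i \<le> a (r (r' n)) i" if "m \<le> n" "i < Suc N" for m n i
  proof (cases "i = N")
    case True
    then show ?thesis using monoD[OF r'(2) \<open>m \<le> n\<close>] by simp
  next
    case False
    then have "i < N" using \<open>i < Suc N\<close> by simp
    moreover have "r' m \<le> r' n" using strict_mono_less_eq[OF r'(1)] \<open>m \<le> n\<close> by blast
    ultimately show ?thesis using r(2) by blast
  qed
  moreover have "strict_mono (\<lambda>n. r (r' n))" using r(1) r'(1) by (rule strict_mono_compose)
  ultimately show ?case by blast
qed

lemma dickson:
  fixes a :: "nat \<Rightarrow> nat \<Rightarrow> nat"
  assumes "\<And>n. a n \<in> multi_idx N"
  shows "\<exists>i j. i < j \<and> a i \<le> a j"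
proof -
  obtain r :: "nat \<Rightarrow> nat" where r: "strict_mono r" "\<forall>m n. m \<le> n \<longrightarrow> (\<forall>i<N. a (r m) i \<le> a (r n) i)"
    using dickson_subseq[of N a] by blast
  have "a (r 0) i \<le> a (r 1) i" for i
  proof (cases "i < N")
    case True
    then show ?thesis using r(2) by simp
  next
    case False
    then show ?thesis using assms[of "r 0"] by (simp add: multi_idx_def)
  qed
  then have "a (r 0) \<le> a (r 1)" by (simp add: le_fun_def)
  moreover have "r 0 < r 1" using r(1) by (simp add: strict_mono_def)
  ultimately show ?thesis by blast
qed

section \<open>Hilbert's basis theorem\<close>

definition coeff_supp :: "((nat \<Rightarrow> nat) \<Rightarrow> 'a::zero) \<Rightarrow> (nat \<Rightarrow> nat) set" where
  "coeff_supp f = {\<alpha>. f \<alpha> \<noteq> 0}"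

definition fin_polys :: "nat \<Rightarrow> ((nat \<Rightarrow> nat) \<Rightarrow> 'a::zero) set" where
  "fin_polys N = {f. finite (coeff_supp f) \<and> coeff_supp f \<subseteq> multi_idx N}"

definition monom_mult :: "(nat \<Rightarrow> nat) \<Rightarrow> ((nat \<Rightarrow> nat) \<Rightarrow> 'a::zero) \<Rightarrow> (nat \<Rightarrow> nat) \<Rightarrow> 'a" where
  "monom_mult c f = (\<lambda>\<alpha>. if c \<le> \<alpha> then f (\<alpha> - c) else 0)"

definition is_leading_monom :: "nat \<Rightarrow> ((nat \<Rightarrow> nat) \<Rightarrow> 'a::zero) \<Rightarrow> (nat \<Rightarrow> nat) \<Rightarrow> bool" where
  "is_leading_monom N f a \<longleftrightarrow>
     a \<in> coeff_supp f \<and> (\<forall>b\<in>coeff_supp f. grlex_key N b \<le> grlex_key N a)"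

lemma leading_monom_exists:
  assumes "f \<in> fin_polys N" "coeff_supp f \<noteq> {}"
  shows "\<exists>a. is_leading_monom N f a"
proof -
  have fin: "finite (grlex_key N ` coeff_supp f)" using assms(1) by (simp add: fin_polys_def)
  obtain a where a: "a \<in> coeff_supp f" "grlex_key N a = Max (grlex_key N ` coeff_supp f)"
    using Max_in[OF fin] assms(2) by (metis empty_is_image imageE)
  then show ?thesis using fin by (auto simp: is_leading_monom_def)
qed

lemma coeff_supp_monom_mult: "coeff_supp (monom_mult c f) = (\<lambda>b. b + c) ` coeff_supp f"
proof (intro equalityI subsetI)
  fix a assume "a \<in> coeff_supp (monom_mult c f)"
  then have "c \<le> a" "f (a - c) \<noteq> 0"
    by (auto simp: coeff_supp_def monom_mult_def split: if_splits)
  moreover from \<open>c \<le> a\<close> have "a = (a - c) + c" by (simp add: le_fun_def fun_eq_iff)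
  ultimately show "a \<in> (\<lambda>b. b + c) ` coeff_supp f"
    by (auto simp: coeff_supp_def)
next
  fix a assume "a \<in> (\<lambda>b. b + c) ` coeff_supp f"
  then show "a \<in> coeff_supp (monom_mult c f)"
    by (auto simp: coeff_supp_def monom_mult_def le_fun_def)
qed

lemma monom_mult_fin_polys:
  "f \<in> fin_polys N \<Longrightarrow> c \<in> multi_idx N \<Longrightarrow> monom_mult c f \<in> fin_polys N"
  by (auto simp: fin_polys_def coeff_supp_monom_mult multi_idx_add)

lemma lincomb_fin_polys:
  fixes f h :: "(nat \<Rightarrow> nat) \<Rightarrow> 'a::semiring_0"
  assumes "f \<in> fin_polys N" "h \<in> fin_polys N"
  shows "(\<lambda>\<alpha>. f \<alpha> + r * h \<alpha>) \<in> fin_polys N"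
proof -
  have "coeff_supp (\<lambda>\<alpha>. f \<alpha> + r * h \<alpha>) \<subseteq> coeff_supp f \<union> coeff_supp h"
    by (auto simp: coeff_supp_def)
  then show ?thesis using assms unfolding fin_polys_def by (auto intro: finite_subset)
qed

inductive_set poly_ideal :: "nat \<Rightarrow> ((nat \<Rightarrow> nat) \<Rightarrow> 'a::field) set \<Rightarrow> ((nat \<Rightarrow> nat) \<Rightarrow> 'a) set"
  for N G where
  gen: "g \<in> G \<Longrightarrow> g \<in> poly_ideal N G"
| zero: "(\<lambda>_. 0) \<in> poly_ideal N G"
| lincomb: "f \<in> poly_ideal N G \<Longrightarrow> h \<in> poly_ideal N G \<Longrightarrow> c \<in> multi_idx N \<Longrightarrow>
     (\<lambda>\<alpha>. f \<alpha> + r * monom_mult c h \<alpha>) \<in> poly_ideal N G"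

lemma poly_ideal_fin_polys: "G \<subseteq> fin_polys N \<Longrightarrow> poly_ideal N G \<subseteq> fin_polys N"
proof
  fix f assume G: "G \<subseteq> fin_polys N" and f: "f \<in> poly_ideal N G"
  from f G show "f \<in> fin_polys N"
  proof (induction rule: poly_ideal.induct)
    case zero
    show ?case by (simp add: fin_polys_def coeff_supp_def)
  qed (auto intro: lincomb_fin_polys monom_mult_fin_polys)
qed

lemma poly_ideal_mono: "G \<subseteq> G' \<Longrightarrow> poly_ideal N G \<subseteq> poly_ideal N G'"
proof
  fix f assume G: "G \<subseteq> G'" and f: "f \<in> poly_ideal N G"
  from f G show "f \<in> poly_ideal N G'"
    by (induction rule: poly_ideal.induct) (auto intro: poly_ideal.intros)
qed

lemma leading_monom_reduction:
  fixes f h :: "(nat \<Rightarrow> nat) \<Rightarrow> 'a::field"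
  assumes f: "f \<in> fin_polys N" "is_leading_monom N f a"
    and h: "h \<in> fin_polys N" "is_leading_monom N h b"
    and "b \<le> a"
  shows "coeff_supp (\<lambda>d. f d + (- f a / h b) * monom_mult (a - b) h d)
           \<subseteq> {d \<in> multi_idx N. grlex_key N d < grlex_key N a}"
    (is "coeff_supp ?f' \<subseteq> _")
proof
  fix d assume d: "d \<in> coeff_supp ?f'"
  have aN: "a \<in> multi_idx N" using f by (auto simp: is_leading_monom_def fin_polys_def)
  have a_split: "a = b + (a - b)" and ab: "a - (a - b) = b"
    using \<open>b \<le> a\<close> by (auto simp: le_fun_def fun_eq_iff)
  have "?f' \<in> fin_polys N"
    using aN by (intro lincomb_fin_polys f(1) monom_mult_fin_polys h(1) multi_idx_diff)
  then have dN: "d \<in> multi_idx N" using d by (auto simp: fin_polys_def)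
  have "h b \<noteq> 0" using h(2) by (simp add: is_leading_monom_def coeff_supp_def)
  then have "?f' a = 0" using ab by (simp add: monom_mult_def le_fun_def)
  then have "d \<noteq> a" using d by (auto simp: coeff_supp_def)
  moreover have "grlex_key N d \<le> grlex_key N a"
  proof (cases "f d = 0")
    case True
    then have "d \<in> coeff_supp (monom_mult (a - b) h)" using d by (auto simp: coeff_supp_def)
    then obtain e where e: "e \<in> coeff_supp h" "d = e + (a - b)"
      by (auto simp: coeff_supp_monom_mult)
    have "grlex_key N e \<le> grlex_key N b" using h(2) e(1) by (simp add: is_leading_monom_def)
    then have "grlex_key N (e + (a - b)) \<le> grlex_key N (b + (a - b))" by (rule grlex_key_add_mono)
    then show ?thesis using e(2) a_split by simp
  next
    case False
    then show ?thesis using f(2) by (simp add: is_leading_monom_def coeff_supp_def)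
  qed
  ultimately have "grlex_key N d < grlex_key N a"
    using inj_on_grlex_key[of N] dN aN by (auto simp: inj_on_def order.order_iff_strict)
  with dN show "d \<in> {d \<in> multi_idx N. grlex_key N d < grlex_key N a}" by simp
qed

lemma poly_ideal_subset_if_leading_monoms_divisible:
  fixes G G' :: "((nat \<Rightarrow> nat) \<Rightarrow> 'a::field) set"
  assumes "G \<subseteq> G'" and "G' \<subseteq> fin_polys N"
    and divisible: "\<And>f a. f \<in> poly_ideal N G' \<Longrightarrow> is_leading_monom N f a \<Longrightarrow>
       \<exists>h\<in>poly_ideal N G. \<exists>b. is_leading_monom N h b \<and> b \<le> a"
  shows "poly_ideal N G' \<subseteq> poly_ideal N G"
proof -
  have I_J: "poly_ideal N G \<subseteq> poly_ideal N G'" by (rule poly_ideal_mono) fact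
  have J_polys: "poly_ideal N G' \<subseteq> fin_polys N" by (rule poly_ideal_fin_polys) fact
  have zero_in: "f \<in> poly_ideal N G" if "coeff_supp f = {}" for f
  proof -
    have "f = (\<lambda>_. 0)" using that by (auto simp: coeff_supp_def)
    then show ?thesis by (simp add: poly_ideal.zero)
  qed
  have "f \<in> poly_ideal N G" if "f \<in> poly_ideal N G'" "is_leading_monom N f a" for f a
    using that
  proof (induction "grlex_rank N a" arbitrary: f a rule: less_induct)
    case less
    obtain h b where h: "h \<in> poly_ideal N G" "is_leading_monom N h b" "b \<le> a"
      using divisible less.prems by blast
    define r where "r = - f a / h b"
    define f' where "f' = (\<lambda>d. f d + r * monom_mult (a - b) h d)"
    have "f \<in> fin_polys N" "h \<in> fin_polys N" using less.prems h(1) I_J J_polys by auto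
    then have below: "coeff_supp f' \<subseteq> {d \<in> multi_idx N. grlex_key N d < grlex_key N a}"
      unfolding f'_def r_def using less.prems h by (intro leading_monom_reduction)
    have c: "a - b \<in> multi_idx N"
      using less.prems(2) \<open>f \<in> fin_polys N\<close>
      by (auto simp: is_leading_monom_def fin_polys_def intro: multi_idx_diff)
    have "f' \<in> poly_ideal N G'"
      unfolding f'_def using less.prems(1) h(1) I_J c by (blast intro: poly_ideal.lincomb)
    have "f' \<in> poly_ideal N G"
    proof (cases "coeff_supp f' = {}")
      case False
      then obtain a' where a': "is_leading_monom N f' a'"
        using leading_monom_exists \<open>f' \<in> poly_ideal N G'\<close> J_polys by blast
      then have "grlex_rank N a' < grlex_rank N a"
        using below grlex_rank_less by (auto simp: is_leading_monom_def)
      then show ?thesis using less.hyps \<open>f' \<in> poly_ideal N G'\<close> a' by blast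
    qed (rule zero_in)
    then have "(\<lambda>d. f' d + (- r) * monom_mult (a - b) h d) \<in> poly_ideal N G"
      using h(1) c by (rule poly_ideal.lincomb)
    then show "f \<in> poly_ideal N G" by (simp add: f'_def)
  qed
  then show ?thesis
    using zero_in leading_monom_exists J_polys by blast
qed

lemma poly_ideal_new_leading_monom:
  fixes G G' :: "((nat \<Rightarrow> nat) \<Rightarrow> 'a::field) set"
  assumes "G \<subseteq> G'" "G' \<subseteq> fin_polys N" "\<not> poly_ideal N G' \<subseteq> poly_ideal N G"
  shows "\<exists>f a. f \<in> poly_ideal N G' \<and> is_leading_monom N f a \<and>
    (\<forall>h\<in>poly_ideal N G. \<forall>b. is_leading_monom N h b \<longrightarrow> \<not> b \<le> a)"
proof (rule ccontr)
  assume "\<not> ?thesis"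
  then have "poly_ideal N G' \<subseteq> poly_ideal N G"
    by (intro poly_ideal_subset_if_leading_monoms_divisible[OF assms(1,2)]) blast
  with assms(3) show False ..
qed

lemma poly_ideal_chain_stabilizes:
  fixes P :: "nat \<Rightarrow> (nat \<Rightarrow> nat) \<Rightarrow> 'a::field"
  assumes "\<And>i. P i \<in> fin_polys N"
  shows "\<exists>n0. \<forall>m. P m \<in> poly_ideal N (P ` {..n0})"
proof (rule ccontr)
  assume unstable: "\<not> ?thesis"
  define I where "I n = poly_ideal N (P ` {..n})" for n
  have I_mono: "I n \<subseteq> I m" if "n \<le> m" for n m
    unfolding I_def using that by (intro poly_ideal_mono) auto
  have I_polys: "I n \<subseteq> fin_polys N" for n
    unfolding I_def using assms by (intro poly_ideal_fin_polys) auto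
  \<comment> \<open>Every stage admits a later element whose leading monomial is divisible by none of the
    current ones; iterating yields a bad sequence of monomials, contradicting Dickson's lemma.\<close>
  have "\<exists>m f a. n \<le> m \<and> f \<in> I m \<and> is_leading_monom N f a \<and>
      (\<forall>h\<in>I n. \<forall>b. is_leading_monom N h b \<longrightarrow> \<not> b \<le> a)" for n
  proof -
    obtain m0 where "P m0 \<notin> I n" using unstable unfolding I_def by blast
    moreover have "P m0 \<in> I (max n m0)" unfolding I_def by (rule poly_ideal.gen) auto
    ultimately have "\<not> I (max n m0) \<subseteq> I n" by blast
    moreover have "P ` {..n} \<subseteq> P ` {..max n m0}" "P ` {..max n m0} \<subseteq> fin_polys N"
      using assms by auto
    ultimately have "\<exists>f a. f \<in> I (max n m0) \<and> is_leading_monom N f a \<and>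
        (\<forall>h\<in>I n. \<forall>b. is_leading_monom N h b \<longrightarrow> \<not> b \<le> a)"
      unfolding I_def by (intro poly_ideal_new_leading_monom)
    then show ?thesis by (intro exI[of _ "max n m0"]) auto
  qed
  then obtain M F A where MFA: "\<And>n. n \<le> M n \<and> F n \<in> I (M n) \<and> is_leading_monom N (F n) (A n) \<and>
      (\<forall>h\<in>I n. \<forall>b. is_leading_monom N h b \<longrightarrow> \<not> b \<le> A n)"
    by metis
  define ns where "ns j = (M ^^ j) 0" for j
  have "A n \<in> multi_idx N" for n
    using MFA[of n] I_polys by (auto simp: is_leading_monom_def fin_polys_def)
  then obtain i j where "i < j" "A (ns i) \<le> A (ns j)"
    using dickson[of "\<lambda>j. A (ns j)"] by blast
  have "incseq ns" by (rule incseq_SucI) (simp add: ns_def MFA)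
  then have "ns (Suc i) \<le> ns j" using \<open>i < j\<close> by (simp add: incseq_def)
  then have "M (ns i) \<le> ns j" by (simp add: ns_def)
  then have "F (ns i) \<in> I (ns j)" using MFA[of "ns i"] I_mono by blast
  then show False using MFA[of "ns i"] MFA[of "ns j"] \<open>A (ns i) \<le> A (ns j)\<close> by blast
qed

section \<open>Evaluation of polynomials\<close>

definition poly_eval :: "nat \<Rightarrow> (nat \<Rightarrow> 'a) \<Rightarrow> ((nat \<Rightarrow> nat) \<Rightarrow> 'a::comm_ring_1) \<Rightarrow> 'a" where
  "poly_eval N x f = (\<Sum>\<alpha>\<in>coeff_supp f. f \<alpha> * monom_val x N \<alpha>)"

lemma poly_eval_superset:
  assumes "finite B" "coeff_supp f \<subseteq> B"
  shows "poly_eval N x f = (\<Sum>\<alpha>\<in>B. f \<alpha> * monom_val x N \<alpha>)"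
  unfolding poly_eval_def
  by (rule sum.mono_neutral_left[OF assms]) (auto simp: coeff_supp_def)

lemma monom_val_add: "monom_val x N (b + c) = monom_val x N b * monom_val x N c"
  by (simp add: monom_val_def power_add prod.distrib)

lemma poly_eval_monom_mult:
  "poly_eval N x (monom_mult c h) = monom_val x N c * poly_eval N x h"
proof -
  have "inj_on (\<lambda>b. b + c) (coeff_supp h)" by (rule inj_onI) simp
  then have "poly_eval N x (monom_mult c h)
      = (\<Sum>b\<in>coeff_supp h. monom_mult c h (b + c) * monom_val x N (b + c))"
    unfolding poly_eval_def coeff_supp_monom_mult by (rule sum.reindex_cong) auto
  also have "\<dots> = (\<Sum>b\<in>coeff_supp h. monom_val x N c * (h b * monom_val x N b))"
    by (intro sum.cong) (auto simp: monom_mult_def monom_val_add le_fun_def)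
  finally show ?thesis by (simp add: poly_eval_def sum_distrib_left)
qed

lemma coeff_supp_sum_subset:
  fixes P :: "'i \<Rightarrow> (nat \<Rightarrow> nat) \<Rightarrow> 'a::semiring_0"
  shows "coeff_supp (\<lambda>\<alpha>. \<Sum>i\<in>I. P i \<alpha> * c i) \<subseteq> (\<Union>i\<in>I. coeff_supp (P i))"
proof
  fix \<alpha> assume "\<alpha> \<in> coeff_supp (\<lambda>\<alpha>. \<Sum>i\<in>I. P i \<alpha> * c i)"
  then have "(\<Sum>i\<in>I. P i \<alpha> * c i) \<noteq> 0" by (simp add: coeff_supp_def)
  then obtain i where "i \<in> I" "P i \<alpha> * c i \<noteq> 0" by (rule sum.not_neutral_contains_not_neutral)
  then have "P i \<alpha> \<noteq> 0" by auto
  with \<open>i \<in> I\<close> show "\<alpha> \<in> (\<Union>i\<in>I. coeff_supp (P i))" by (auto simp: coeff_supp_def)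
qed

lemma sum_fin_polys:
  fixes P :: "'i \<Rightarrow> (nat \<Rightarrow> nat) \<Rightarrow> 'a::semiring_0"
  assumes "finite I" "\<And>i. i \<in> I \<Longrightarrow> P i \<in> fin_polys N"
  shows "(\<lambda>\<alpha>. \<Sum>i\<in>I. P i \<alpha> * c i) \<in> fin_polys N"
  using coeff_supp_sum_subset[of P c I] assms
  by (auto simp: fin_polys_def intro: finite_subset)

lemma poly_eval_sum:
  assumes "finite I" "\<And>i. i \<in> I \<Longrightarrow> P i \<in> fin_polys N"
  shows "poly_eval N x (\<lambda>\<alpha>. \<Sum>i\<in>I. P i \<alpha> * c i) = (\<Sum>i\<in>I. poly_eval N x (P i) * c i)"
proof -
  define B where "B = (\<Union>i\<in>I. coeff_supp (P i))"
  have B: "finite B" using assms by (auto simp: B_def fin_polys_def)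
  have "poly_eval N x (\<lambda>\<alpha>. \<Sum>i\<in>I. P i \<alpha> * c i)
      = (\<Sum>\<alpha>\<in>B. (\<Sum>i\<in>I. P i \<alpha> * c i) * monom_val x N \<alpha>)"
    unfolding B_def by (rule poly_eval_superset[OF B[unfolded B_def] coeff_supp_sum_subset])
  also have "\<dots> = (\<Sum>i\<in>I. (\<Sum>\<alpha>\<in>B. P i \<alpha> * monom_val x N \<alpha>) * c i)"
    unfolding sum_distrib_right by (subst sum.swap) (simp add: ac_simps)
  also have "\<dots> = (\<Sum>i\<in>I. poly_eval N x (P i) * c i)"
    by (intro sum.cong refl arg_cong2[where f = "(*)"] poly_eval_superset[symmetric, OF B])
       (auto simp: B_def)
  finally show ?thesis .
qed

lemma poly_eval_lincomb:
  assumes "f \<in> fin_polys N" "h \<in> fin_polys N"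
  shows "poly_eval N x (\<lambda>\<alpha>. f \<alpha> + r * h \<alpha>) = poly_eval N x f + r * poly_eval N x h"
  using poly_eval_sum[of "{0, 1::nat}" "\<lambda>i. if i = 0 then f else h" N x "\<lambda>i. if i = 0 then 1 else r"]
    assms by (simp add: mult.commute)

lemma poly_eval_poly_ideal_eq_0:
  assumes "f \<in> poly_ideal N G" "G \<subseteq> fin_polys N" "\<And>g. g \<in> G \<Longrightarrow> poly_eval N x g = 0"
  shows "poly_eval N x f = 0"
  using assms(1)
proof (induction rule: poly_ideal.induct)
  case zero
  then show ?case by (simp add: poly_eval_def coeff_supp_def)
next
  case (lincomb f h c r)
  then have "f \<in> fin_polys N" "monom_mult c h \<in> fin_polys N"
    using poly_ideal_fin_polys[OF assms(2)] by (auto intro: monom_mult_fin_polys)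
  then show ?case using lincomb.IH by (simp add: poly_eval_lincomb poly_eval_monom_mult)
qed (use assms(3) in blast)

context
  fixes k :: "'a::field set"
  assumes k: "is_subfield k"
begin

lemma subfield_sum: "(\<And>i. i \<in> A \<Longrightarrow> f i \<in> k) \<Longrightarrow> sum f A \<in> k"
  using k by (induction A rule: infinite_finite_induct) (auto simp: is_subfield_def)

lemma subfield_prod: "(\<And>i. i \<in> A \<Longrightarrow> f i \<in> k) \<Longrightarrow> prod f A \<in> k"
  using k by (induction A rule: infinite_finite_induct) (auto simp: is_subfield_def)

lemma subfield_power: "a \<in> k \<Longrightarrow> a ^ n \<in> k"
  using subfield_prod[of "{..<n}" "\<lambda>_. a"] by simp

lemma monom_val_in_subfield: "(\<And>i. i < N \<Longrightarrow> x i \<in> k) \<Longrightarrow> monom_val x N \<alpha> \<in> k"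
  unfolding monom_val_def by (intro subfield_prod subfield_power) simp

lemma poly_eval_in_subfield:
  assumes "f \<in> fin_polys N" "\<And>\<alpha>. \<alpha> \<in> multi_idx N \<Longrightarrow> f \<alpha> \<in> k" "\<And>i. i < N \<Longrightarrow> x i \<in> k"
  shows "poly_eval N x f \<in> k"
  unfolding poly_eval_def
proof (intro subfield_sum)
  fix \<alpha> assume "\<alpha> \<in> coeff_supp f"
  then have "f \<alpha> \<in> k" using assms(1,2) by (auto simp: fin_polys_def)
  moreover have "monom_val x N \<alpha> \<in> k" using assms(3) by (rule monom_val_in_subfield)
  ultimately show "f \<alpha> * monom_val x N \<alpha> \<in> k" using k by (simp add: is_subfield_def)
qed

end

section \<open>Non-archimedean absolute values and power series\<close>

definition av_tendsto :: "('a::field \<Rightarrow> real) \<Rightarrow> (nat \<Rightarrow> 'a) \<Rightarrow> 'a \<Rightarrow> bool" where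
  "av_tendsto av s L \<longleftrightarrow> (\<forall>e>0. \<exists>M. \<forall>n\<ge>M. av (s n - L) < e)"

context
  fixes av :: "'a::field \<Rightarrow> real"
  assumes av: "nonarch_abs av"
begin

lemma av_eq_0_iff: "av x = 0 \<longleftrightarrow> x = 0"
  using av by (simp add: nonarch_abs_def)

lemma av_0 [simp]: "av 0 = 0"
  by (simp add: av_eq_0_iff)

lemma av_nonneg: "av x \<ge> 0"
  using av by (simp add: nonarch_abs_def)

lemma av_pos_iff: "av x > 0 \<longleftrightarrow> x \<noteq> 0"
  using av_nonneg[of x] av_eq_0_iff[of x] by linarith

lemma av_mult: "av (x * y) = av x * av y"
  using av by (simp add: nonarch_abs_def)

lemma av_add_le_max: "av (x + y) \<le> max (av x) (av y)"
  using av by (simp add: nonarch_abs_def)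

lemma av_1 [simp]: "av 1 = 1"
  using av_mult[of 1 1] av_eq_0_iff[of 1] by simp

lemma av_power: "av (x ^ n) = av x ^ n"
  by (induction n) (simp_all add: av_mult)

lemma av_minus [simp]: "av (- x) = av x"
proof -
  have "av (- 1) ^ 2 = 1" using av_power[of "- 1" 2] by simp
  then have "av (- 1) = 1" using av_nonneg[of "- 1"] by (simp add: power2_eq_1_iff)
  then show ?thesis using av_mult[of "- 1" x] by simp
qed

lemma av_minus_commute: "av (x - y) = av (y - x)"
  using av_minus[of "x - y"] by simp

lemma av_add_less: "av x < e \<Longrightarrow> av y < e \<Longrightarrow> av (x + y) < e"
  using av_add_le_max[of x y] by simp

lemma av_diff_less: "av x < e \<Longrightarrow> av y < e \<Longrightarrow> av (x - y) < e"
  using av_add_less[of x e "- y"] by simp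

lemma av_sum_less:
  assumes "finite A" "e > 0" "\<And>i. i \<in> A \<Longrightarrow> av (f i) < e"
  shows "av (sum f A) < e"
  using assms(1,3) by (induction A rule: finite_induct) (simp_all add: assms(2) av_add_less)

lemma av_add_eq_of_less:
  assumes "av y < av x"
  shows "av (x + y) = av x"
proof -
  have "av (x + y) \<le> av x" using av_add_le_max[of x y] assms by simp
  moreover have "av x \<le> max (av (x + y)) (av y)" using av_add_le_max[of "x + y" "- y"] by simp
  then have "av x \<le> av (x + y)" using assms by (simp add: le_max_iff_disj)
  ultimately show ?thesis by simp
qed

lemma eq_0_if_av_less_all:
  assumes "\<And>e. e > 0 \<Longrightarrow> av x < e"
  shows "x = 0"
proof (rule ccontr)
  assume "x \<noteq> 0"
  then have "av x > 0" using av_nonneg[of x] av_eq_0_iff[of x] by simp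
  then show False using assms[of "av x"] by simp
qed

lemma abs_has_sum_unique:
  assumes "abs_has_sum av f I S" "abs_has_sum av f I T"
  shows "S = T"
proof -
  have "av (S - T) < e" if "e > 0" for e
  proof -
    obtain F1 where F1: "finite F1" "F1 \<subseteq> I"
      "\<forall>F. finite F \<and> F1 \<subseteq> F \<and> F \<subseteq> I \<longrightarrow> av (sum f F - S) < e"
      using assms(1)[unfolded abs_has_sum_def, rule_format, OF \<open>e > 0\<close>] by blast
    obtain F2 where F2: "finite F2" "F2 \<subseteq> I"
      "\<forall>F. finite F \<and> F2 \<subseteq> F \<and> F \<subseteq> I \<longrightarrow> av (sum f F - T) < e"
      using assms(2)[unfolded abs_has_sum_def, rule_format, OF \<open>e > 0\<close>] by blast
    have "av (sum f (F1 \<union> F2) - T) < e" "av (sum f (F1 \<union> F2) - S) < e"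
      using F1 F2 by simp_all
    then have "av ((sum f (F1 \<union> F2) - T) - (sum f (F1 \<union> F2) - S)) < e"
      by (rule av_diff_less)
    then show ?thesis by simp
  qed
  then have "S - T = 0" by (rule eq_0_if_av_less_all)
  then show ?thesis by simp
qed

lemma ps_eval_eqI:
  assumes "abs_has_sum av (\<lambda>\<alpha>. g \<alpha> * monom_val x N \<alpha>) (multi_idx N) S"
  shows "ps_eval av N g x = S"
  unfolding ps_eval_def
proof (rule the_equality)
  fix T assume "abs_has_sum av (\<lambda>\<alpha>. g \<alpha> * monom_val x N \<alpha>) (multi_idx N) T"
  then show "T = S" using assms by (rule abs_has_sum_unique)
qed (fact assms)

lemma av_limit_eq_eventual_av:
  assumes "av_tendsto av s L" "\<And>n. n \<ge> M \<Longrightarrow> av (s n) = r"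
  shows "av L = r"
proof (cases "r = 0")
  case True
  have "av L < e" if "e > 0" for e
  proof -
    obtain M' where "\<forall>n\<ge>M'. av (s n - L) < e"
      using assms(1) \<open>e > 0\<close> unfolding av_tendsto_def by blast
    then obtain n where "n \<ge> M" "av (s n - L) < e" by (meson max.cobounded1 max.cobounded2)
    have "av (s n) < e" using assms(2) \<open>n \<ge> M\<close> \<open>e > 0\<close> True by simp
    then have "av (s n - (s n - L)) < e" using \<open>av (s n - L) < e\<close> by (rule av_diff_less)
    then show ?thesis by simp
  qed
  then have "L = 0" by (rule eq_0_if_av_less_all)
  then show ?thesis using True by simp
next
  case False
  then have "r > 0" using assms(2)[of M] av_nonneg[of "s M"] by simp
  then obtain M' where "\<forall>n\<ge>M'. av (s n - L) < r"
    using assms(1) unfolding av_tendsto_def by blast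
  then obtain n where "n \<ge> M" "av (s n - L) < r" by (meson max.cobounded1 max.cobounded2)
  then have "av (s n + (L - s n)) = av (s n)"
    using assms(2) by (intro av_add_eq_of_less) (simp add: av_minus_commute)
  then show ?thesis using assms(2) \<open>n \<ge> M\<close> by simp
qed

lemma av_power_series_leading_term:
  assumes "av u < 1" "\<And>i. av (a i) \<le> 1" "av (a j) = 1" "\<And>i. i < j \<Longrightarrow> a i = 0" "j < n"
  shows "av (\<Sum>i<n. a i * u ^ i) = av u ^ j"
proof (cases "av u ^ j = 0")
  case True
  then have "u = 0" "j > 0" using av_eq_0_iff[of u] by simp_all
  then have "a i * u ^ i = 0" for i using assms(4) by (cases "i < j") auto
  then have "(\<Sum>i<n. a i * u ^ i) = 0" by (intro sum.neutral) blast
  then show ?thesis using True by simp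
next
  case False
  moreover have "av u ^ j \<ge> 0" by (simp add: av_nonneg)
  ultimately have pos: "av u ^ j > 0" by linarith
  have "(\<Sum>i<n. a i * u ^ i) = a j * u ^ j + (\<Sum>i\<in>{..<n} - {j}. a i * u ^ i)"
    using \<open>j < n\<close> sum.remove[of "{..<n}" j "\<lambda>i. a i * u ^ i"] by simp
  moreover have "av (\<Sum>i\<in>{..<n} - {j}. a i * u ^ i) < av u ^ j"
  proof (rule av_sum_less[OF _ pos])
    fix i assume i: "i \<in> {..<n} - {j}"
    show "av (a i * u ^ i) < av u ^ j"
    proof (cases "i < j")
      case True
      then show ?thesis using assms(4) pos by simp
    next
      case False
      then have "j < i" using i by simp
      have "av (a i * u ^ i) \<le> av u ^ i"
        using assms(2)[of i] av_nonneg[of u] by (simp add: av_mult av_power av_nonneg mult_left_le_one_le)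
      also have "\<dots> = av u ^ j * av u ^ (i - j)"
        using \<open>j < i\<close> by (simp flip: power_add)
      also have "\<dots> < av u ^ j"
        using \<open>j < i\<close> assms(1) pos av_nonneg[of u] by (simp add: power_less_one_iff)
      finally show ?thesis .
    qed
  qed simp
  ultimately show ?thesis using assms(3) by (simp add: av_add_eq_of_less av_mult av_power)
qed

lemma av_power_series_limit_dichotomy:
  assumes "av u < 1" and units: "\<And>i. a i \<noteq> 0 \<Longrightarrow> av (a i) = 1"
    and stable: "\<And>m. \<forall>i\<le>n0. a i = 0 \<Longrightarrow> a m = 0"
    and lim: "av_tendsto av (\<lambda>n. \<Sum>i<n. a i * u ^ i) L"
  shows "L = 0 \<or> av L > (if u = 0 then 1 else av u ^ n0) / 2"
proof (cases "\<forall>i. a i = 0")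
  case True
  have "av L = 0"
    using lim by (rule av_limit_eq_eventual_av[where M = 0]) (simp add: True av_0)
  then show ?thesis by (simp add: av_eq_0_iff)
next
  case False
  define j where "j = (LEAST i. a i \<noteq> 0)"
  from False have "\<exists>i. a i \<noteq> 0" by blast
  then have "a j \<noteq> 0" unfolding j_def by (rule LeastI_ex)
  have below: "a i = 0" if "i < j" for i using that not_less_Least unfolding j_def by blast
  have "j \<le> n0"
  proof (rule ccontr)
    assume "\<not> j \<le> n0"
    then have "\<forall>i\<le>n0. a i = 0" using below by simp
    then have "a j = 0" by (rule stable)
    with \<open>a j \<noteq> 0\<close> show False ..
  qed
  have "av (a i) \<le> 1" for i using units[of i] by (cases "a i = 0") (simp_all add: av_0)
  then have "av L = av u ^ j"
    using lim av_power_series_leading_term[OF assms(1)] units \<open>a j \<noteq> 0\<close> below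
    by (intro av_limit_eq_eventual_av[OF lim, where M = "Suc j"]) auto
  moreover have "av u ^ j = 0 \<or> av u ^ j > (if u = 0 then 1 else av u ^ n0) / 2"
  proof (cases "u = 0")
    case True
    then show ?thesis by (cases j) (simp_all add: av_0)
  next
    case False
    then have "0 < av u" "av u < 1" using assms(1) by (simp_all add: av_pos_iff)
    then have "av u ^ n0 \<le> av u ^ j" using \<open>j \<le> n0\<close> by (simp add: power_decreasing)
    moreover have "0 < av u ^ n0" using \<open>0 < av u\<close> by simp
    ultimately show ?thesis using False by simp
  qed
  ultimately show ?thesis by (auto simp: av_eq_0_iff av_0 zero_power)
qed

end

lemma ps_eval_tendsto_of_polys:
  assumes av: "nonarch_abs av" and complete: "abs_complete av"
    and q: "\<And>n. q n \<in> fin_polys N"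
    and conv: "\<forall>e>0. \<exists>M. \<forall>n\<ge>M. \<forall>\<alpha>\<in>multi_idx N. av (g \<alpha> - q n \<alpha>) < e"
    and mon: "\<And>\<alpha>. av (monom_val x N \<alpha>) \<le> 1"
  shows "av_tendsto av (\<lambda>n. poly_eval N x (q n)) (ps_eval av N g x)"
proof -
  let ?t = "\<lambda>\<alpha>. g \<alpha> * monom_val x N \<alpha>" and ?s = "\<lambda>n. poly_eval N x (q n)"
  have approx: "av (sum ?t F - ?s n) < e"
    if e: "e > 0" and n: "\<forall>\<alpha>\<in>multi_idx N. av (g \<alpha> - q n \<alpha>) < e"
      and F: "finite F" "coeff_supp (q n) \<subseteq> F" "F \<subseteq> multi_idx N" for e n F
  proof -
    have "sum ?t F - ?s n = (\<Sum>\<alpha>\<in>F. (g \<alpha> - q n \<alpha>) * monom_val x N \<alpha>)"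
      using poly_eval_superset[OF F(1,2)] by (simp add: sum_subtractf left_diff_distrib)
    also have "av \<dots> < e"
    proof (rule av_sum_less[OF av F(1) e])
      fix \<alpha> assume "\<alpha> \<in> F"
      have "av ((g \<alpha> - q n \<alpha>) * monom_val x N \<alpha>) \<le> av (g \<alpha> - q n \<alpha>)"
        using mon[of \<alpha>] av_nonneg[OF av] by (simp add: av_mult[OF av] mult_left_le)
      also have "\<dots> < e" using n F(3) \<open>\<alpha> \<in> F\<close> by blast
      finally show "av ((g \<alpha> - q n \<alpha>) * monom_val x N \<alpha>) < e" .
    qed
    finally show ?thesis .
  qed
  have supp: "finite (coeff_supp (q n))" "coeff_supp (q n) \<subseteq> multi_idx N" for n
    using q[of n] by (simp_all add: fin_polys_def)
  have "\<exists>M. \<forall>m\<ge>M. \<forall>n\<ge>M. av (?s m - ?s n) < e" if "e > 0" for e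
  proof -
    obtain M where M: "\<forall>n\<ge>M. \<forall>\<alpha>\<in>multi_idx N. av (g \<alpha> - q n \<alpha>) < e"
      using conv \<open>e > 0\<close> by blast
    have "av (?s m - ?s n) < e" if "m \<ge> M" "n \<ge> M" for m n
    proof -
      let ?F = "coeff_supp (q m) \<union> coeff_supp (q n)"
      have "av (sum ?t ?F - ?s n) < e" "av (sum ?t ?F - ?s m) < e"
        using M that supp(1) supp(2)[of m] supp(2)[of n] \<open>e > 0\<close> by (auto intro!: approx)
      then have "av ((sum ?t ?F - ?s n) - (sum ?t ?F - ?s m)) < e" by (rule av_diff_less[OF av])
      then show ?thesis by simp
    qed
    then show ?thesis by blast
  qed
  then have "\<exists>L. \<forall>e>0. \<exists>M. \<forall>n\<ge>M. av (?s n - L) < e"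
    by (rule complete[unfolded abs_complete_def, rule_format])
  then obtain L where L: "av_tendsto av ?s L" unfolding av_tendsto_def by blast
  have "abs_has_sum av ?t (multi_idx N) L"
    unfolding abs_has_sum_def
  proof (intro allI impI)
    fix e :: real assume "e > 0"
    obtain M1 where M1: "\<forall>n\<ge>M1. \<forall>\<alpha>\<in>multi_idx N. av (g \<alpha> - q n \<alpha>) < e"
      using conv \<open>e > 0\<close> by blast
    obtain M2 where M2: "\<forall>n\<ge>M2. av (?s n - L) < e"
      using L \<open>e > 0\<close> unfolding av_tendsto_def by blast
    define n where "n = max M1 M2"
    show "\<exists>F0. finite F0 \<and> F0 \<subseteq> multi_idx N \<and>
        (\<forall>F. finite F \<and> F0 \<subseteq> F \<and> F \<subseteq> multi_idx N \<longrightarrow> av (sum ?t F - L) < e)"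
    proof (intro exI[of _ "coeff_supp (q n)"] conjI allI impI supp)
      fix F assume F: "finite F \<and> coeff_supp (q n) \<subseteq> F \<and> F \<subseteq> multi_idx N"
      have "av (sum ?t F - ?s n) < e" using F M1 \<open>e > 0\<close> by (intro approx) (simp_all add: n_def)
      moreover have "av (?s n - L) < e" using M2 by (simp add: n_def)
      ultimately have "av ((sum ?t F - ?s n) + (?s n - L)) < e" by (rule av_add_less[OF av])
      then show "av (sum ?t F - L) < e" by simp
    qed
  qed
  then have "ps_eval av N g x = L" by (rule ps_eval_eqI[OF av])
  with L show ?thesis by simp
qed

definition restrict_idx :: "nat \<Rightarrow> ((nat \<Rightarrow> nat) \<Rightarrow> 'a::zero) \<Rightarrow> (nat \<Rightarrow> nat) \<Rightarrow> 'a" where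
  "restrict_idx N h \<alpha> = (if \<alpha> \<in> multi_idx N then h \<alpha> else 0)"

lemma restrict_idx_fin_polys:
  assumes "poly_over k N h"
  shows "restrict_idx N h \<in> fin_polys N"
proof -
  have "coeff_supp (restrict_idx N h) = {\<alpha> \<in> multi_idx N. h \<alpha> \<noteq> 0}"
    by (auto simp: restrict_idx_def coeff_supp_def)
  with assms show ?thesis by (simp add: poly_over_def fin_polys_def)
qed

lemma gauss_series_eq_restrict_idx:
  "gauss_series_eq av N g (\<lambda>i. restrict_idx N (gs i)) u \<longleftrightarrow> gauss_series_eq av N g gs u"
  by (simp add: gauss_series_eq_def restrict_idx_def)

lemma ps_eval_tendsto_gauss_series:
  assumes av: "nonarch_abs av" and complete: "abs_complete av"
    and P: "\<And>i. P i \<in> fin_polys N" and "gauss_series_eq av N g P u"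
    and "\<And>\<alpha>. av (monom_val x N \<alpha>) \<le> 1"
  shows "av_tendsto av (\<lambda>n. \<Sum>i<n. poly_eval N x (P i) * u ^ i) (ps_eval av N g x)"
proof -
  have "av_tendsto av (\<lambda>n. poly_eval N x (\<lambda>\<alpha>. \<Sum>i<n. P i \<alpha> * u ^ i)) (ps_eval av N g x)"
    using assms(4,5) unfolding gauss_series_eq_def
    by (intro ps_eval_tendsto_of_polys[OF av complete] sum_fin_polys P) simp_all
  then show ?thesis by (simp add: poly_eval_sum P)
qed

theorem mainTheorem8:
  fixes p N :: nat and av :: "'a::field \<Rightarrow> real" and k :: "'a set"
    and u :: 'a and g :: "(nat \<Rightarrow> nat) \<Rightarrow> 'a" and gs :: "nat \<Rightarrow> (nat \<Rightarrow> nat) \<Rightarrow> 'a"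
  assumes "Kflat_setting p av k"
    and "av u < 1"
    and "restricted_ps av N g"
    and "\<forall>i. poly_over k N (gs i)"
    and "gauss_series_eq av N g gs u"
  shows "\<exists>\<epsilon>>0. \<forall>x. (\<forall>i<N. x i \<in> k) \<longrightarrow>
            ps_eval av N g x = 0 \<or> av (ps_eval av N g x) > \<epsilon>"
proof -
  have av: "nonarch_abs av" and complete: "abs_complete av" and k: "is_subfield k"
    and units: "\<And>c. c \<in> k \<Longrightarrow> c \<noteq> 0 \<Longrightarrow> av c = 1"
    using assms(1) by (auto simp: Kflat_setting_def alg_closed_subfield_def)
  have k_le_1: "av c \<le> 1" if "c \<in> k" for c
    using units[OF that] av_0[OF av] by (cases "c = 0") auto
  define P where "P = (\<lambda>i. restrict_idx N (gs i))"
  have P_polys: "P i \<in> fin_polys N" for i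
    unfolding P_def using assms(4) by (blast intro: restrict_idx_fin_polys)
  have P_coeffs: "P i \<alpha> \<in> k" if "\<alpha> \<in> multi_idx N" for i \<alpha>
    using assms(4) that by (simp add: P_def restrict_idx_def poly_over_def)
  have gauss: "gauss_series_eq av N g P u"
    using assms(5) by (simp add: P_def gauss_series_eq_restrict_idx)
  obtain n0 where n0: "\<And>m. P m \<in> poly_ideal N (P ` {..n0})"
    using poly_ideal_chain_stabilizes[of P N] P_polys by blast
  have "ps_eval av N g x = 0 \<or> av (ps_eval av N g x) > (if u = 0 then 1 else av u ^ n0) / 2"
    if x: "\<forall>i<N. x i \<in> k" for x
  proof (rule av_power_series_limit_dichotomy[OF av assms(2)])
    show "poly_eval N x (P i) \<noteq> 0 \<Longrightarrow> av (poly_eval N x (P i)) = 1" for i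
      using x by (intro units poly_eval_in_subfield[OF k] P_polys P_coeffs) auto
    show "poly_eval N x (P m) = 0" if "\<forall>i\<le>n0. poly_eval N x (P i) = 0" for m
      using that P_polys by (intro poly_eval_poly_ideal_eq_0[OF n0]) auto
    show "av_tendsto av (\<lambda>n. \<Sum>i<n. poly_eval N x (P i) * u ^ i) (ps_eval av N g x)"
      using x by (intro ps_eval_tendsto_gauss_series[OF av complete P_polys gauss]
          k_le_1 monom_val_in_subfield[OF k]) auto
  qed
  moreover have "(if u = 0 then 1 else av u ^ n0) / 2 > 0" by (simp add: av_pos_iff[OF av])
  ultimately show ?thesis by blast
qed

end
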